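(* On the noncommutative space $\mathbb{R}^4_\theta$ described in the context, the pair $(g,(\nabla,\sigma))$ is a Riemannian structure on the differential calculus $(\Omega^1_A,\mathrm{d})$.
   Context: Let $\theta\in\mathbb{R}$ and $R=(R^{ab})$ the $4\times4$ matrix (row $a$, column $b$) with rows $(1,e^{-i\theta},1,e^{i\theta})$, $(e^{i\theta},1,e^{-i\theta},1)$, $(1,e^{i\theta},1,e^{-i\theta})$, $(e^{-i\theta},1,e^{i\theta},1)$. $A=\mathbb{C}\langle z^1,\dots,z^4\rangle/(z^iz^j-R^{ji}z^jz^i)$; $\Omega^1_A=\bigoplus_iA\,\mathrm{d}z^i$ free left module with $\mathrm{d}z^i\,z^j=R^{ji}z^j\mathrm{d}z^i$, $\mathrm{d}z^i$ the image of $z^i$ under the Leibniz extension $\mathrm{d}$. With $P$ the matrix with rows $(0,0,1,0),(0,0,0,1),(1,0,0,0),(0,1,0,0)$, $(g_{ij})=\tfrac12P$, $(g^{ij})=2P$: metric $g=\sum g_{ij}\mathrm{d}z^i\otimes_A\mathrm{d}z^j$, inverse metric $g^{-1}(\mathrm{d}z^i\otimes_A\mathrm{d}z^j)=g^{ij}$ (left $A$-linear). $\nabla(\sum_ia_i\mathrm{d}z^i)=\sum_i\mathrm{d}a_i\otimes_A\mathrm{d}z^i$; $\sigma$ left $A$-linear with $\sigma(\mathrm{d}z^i\otimes_A\mathrm{d}z^j)=R^{ji}\mathrm{d}z^j\otimes_A\mathrm{d}z^i$. A Riemannian structure on $(\Omega^1_A,\mathrm{d})$ is a pair of a metric $g$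 (bimodule map $A\to\Omega^1_A\otimes_A\Omega^1_A$ with inverse bimodule map $g^{-1}$ satisfying $\sum_\alpha g^{-1}(\omega\otimes g^\alpha)g_\alpha=\omega=\sum_\alpha g^\alpha g^{-1}(g_\alpha\otimes\omega)$, $g(1)=\sum g^\alpha\otimes g_\alpha$) and a bimodule connection $(\nabla,\sigma)$ on $\Omega^1_A$ (left and right Leibniz rules $\nabla(a\omega)=a\nabla\omega+\mathrm{d}a\otimes\omega$, $\nabla(\omega a)=\nabla(\omega)a+\sigma(\omega\otimes\mathrm{d}a)$, $\sigma$ a bimodule isomorphism) such that $g^{-1}\circ\sigma=g^{-1}$ and $(\mathrm{id}\otimes_Ag^{-1})\circ\nabla^\otimes=\mathrm{d}\circ g^{-1}$ on $\Omega^1_A\otimes_A\Omega^1_A$, where $\nabla^\otimes(\omega\otimes\zeta)=\nabla(\omega)\otimes\zeta+(\sigma\otimes\mathrm{id})(\omega\otimes\nabla\zeta)$. *)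

theory Defs
  imports Complex_Main "HOL-Library.Function_Algebras"
begin

text \<open>The generators z^1..z^4 of the paper are indexed here by 0..3.
  Multi-indices are functions nat => nat vanishing outside 0..3; an element of A is
  the coefficient function (w.r.t. the ordered monomial basis
  z^m = (z^1)^(m 0) (z^2)^(m 1) (z^3)^(m 2) (z^4)^(m 3)).\<close>

type_synonym mi = "nat \<Rightarrow> nat"
type_synonym alg = "mi \<Rightarrow> complex"
type_synonym form1 = "nat \<Rightarrow> alg"
type_synonym form2 = "nat \<Rightarrow> nat \<Rightarrow> alg"
type_synonym form3 = "nat \<Rightarrow> nat \<Rightarrow> nat \<Rightarrow> alg"

text \<open>The matrix R (rows a, columns b, 0-based).\<close>
definition Rmat :: "real \<Rightarrow> nat \<Rightarrow> nat \<Rightarrow> complex" where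
  "Rmat \<theta> a b =
    [[1, exp (- \<i> * of_real \<theta>), 1, exp (\<i> * of_real \<theta>)],
     [exp (\<i> * of_real \<theta>), 1, exp (- \<i> * of_real \<theta>), 1],
     [1, exp (\<i> * of_real \<theta>), 1, exp (- \<i> * of_real \<theta>)],
     [exp (- \<i> * of_real \<theta>), 1, exp (\<i> * of_real \<theta>), 1]] ! a ! b"

definition Pmat :: "nat \<Rightarrow> nat \<Rightarrow> complex" where
  "Pmat a b = [[0,0,1,0],[0,0,0,1],[1,0,0,0],[0,1,0,0]] ! a ! b"

definition Alg :: "alg set" where
  "Alg = {f. finite {m. f m \<noteq> 0} \<and> (\<forall>m. f m \<noteq> 0 \<longrightarrow> (\<forall>k\<ge>4. m k = 0))}"

definition smulA :: "complex \<Rightarrow> alg \<Rightarrow> alg" where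
  "smulA c f = (\<lambda>m. c * f m)"

definition oneA :: alg where
  "oneA = (\<lambda>m. if m = (\<lambda>_. 0) then 1 else 0)"

definition cA :: "complex \<Rightarrow> alg" where
  "cA c = smulA c oneA"

definition zgen :: "nat \<Rightarrow> alg" where
  "zgen i = (\<lambda>m. if m = (\<lambda>k. if k = i then 1 else 0) then 1 else 0)"

text \<open>Reordering coefficient: z^m z^n = mcoef m n z^(m+n), obtained from
  z^i z^j = R^{ji} z^j z^i.\<close>
definition mcoef :: "real \<Rightarrow> mi \<Rightarrow> mi \<Rightarrow> complex" where
  "mcoef \<theta> m n = (\<Prod>i<4. \<Prod>j<i. Rmat \<theta> j i ^ (m i * n j))"

definition amul :: "real \<Rightarrow> alg \<Rightarrow> alg \<Rightarrow> alg" where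
  "amul \<theta> f g = (\<lambda>p. \<Sum>(m, n) \<in> {(m, n). f m \<noteq> 0 \<and> g n \<noteq> 0 \<and> (\<lambda>k. m k + n k) = p}.
                        mcoef \<theta> m n * f m * g n)"

text \<open>The automorphism b |-> lambda_i(b) with dz^i b = lambda_i(b) dz^i, determined by
  dz^i z^j = R^{ji} z^j dz^i.\<close>
definition twist :: "real \<Rightarrow> nat \<Rightarrow> alg \<Rightarrow> alg" where
  "twist \<theta> i b = (\<lambda>n. (\<Prod>j<4. Rmat \<theta> j i ^ n j) * b n)"

subsection \<open>Forms: free left modules on dz^i, dz^i (x) dz^j, dz^i (x) dz^j (x) dz^k\<close>

definition Form1 :: "form1 set" where
  "Form1 = {\<omega>. (\<forall>i<4. \<omega> i \<in> Alg) \<and> (\<forall>i. i \<ge> 4 \<longrightarrow> \<omega> i = 0)}"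

definition Form2 :: "form2 set" where
  "Form2 = {\<tau>. (\<forall>i<4. \<forall>j<4. \<tau> i j \<in> Alg) \<and> (\<forall>i j. (i \<ge> 4 \<or> j \<ge> 4) \<longrightarrow> \<tau> i j = 0)}"

definition dz :: "nat \<Rightarrow> form1" where
  "dz i = (\<lambda>k. if k = i then oneA else 0)"

definition lmul1 :: "real \<Rightarrow> alg \<Rightarrow> form1 \<Rightarrow> form1" where
  "lmul1 \<theta> a \<omega> = (\<lambda>i. amul \<theta> a (\<omega> i))"

definition rmul1 :: "real \<Rightarrow> form1 \<Rightarrow> alg \<Rightarrow> form1" where
  "rmul1 \<theta> \<omega> b = (\<lambda>i. amul \<theta> (\<omega> i) (twist \<theta> i b))"

definition lmul2 :: "real \<Rightarrow> alg \<Rightarrow> form2 \<Rightarrow> form2" where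
  "lmul2 \<theta> a \<tau> = (\<lambda>i j. amul \<theta> a (\<tau> i j))"

definition rmul2 :: "real \<Rightarrow> form2 \<Rightarrow> alg \<Rightarrow> form2" where
  "rmul2 \<theta> \<tau> b = (\<lambda>i j. amul \<theta> (\<tau> i j) (twist \<theta> i (twist \<theta> j b)))"

text \<open>omega (x)_A zeta, expressed in the basis dz^i (x) dz^j\<close>
definition tens :: "real \<Rightarrow> form1 \<Rightarrow> form1 \<Rightarrow> form2" where
  "tens \<theta> \<omega> \<zeta> = (\<lambda>i j. amul \<theta> (\<omega> i) (twist \<theta> i (\<zeta> j)))"

definition dz2 :: "real \<Rightarrow> nat \<Rightarrow> nat \<Rightarrow> form2" where
  "dz2 \<theta> i j = tens \<theta> (dz i) (dz j)"

text \<open>tau (x)_A zeta and omega (x)_A tau in the basis dz^i (x) dz^j (x) dz^k\<close>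
definition tens12 :: "real \<Rightarrow> form2 \<Rightarrow> form1 \<Rightarrow> form3" where
  "tens12 \<theta> \<tau> \<zeta> = (\<lambda>i j k. amul \<theta> (\<tau> i j) (twist \<theta> i (twist \<theta> j (\<zeta> k))))"

definition tens21 :: "real \<Rightarrow> form1 \<Rightarrow> form2 \<Rightarrow> form3" where
  "tens21 \<theta> \<omega> \<tau> = (\<lambda>i j k. amul \<theta> (\<omega> i) (twist \<theta> i (\<tau> j k)))"

definition is_leibniz_d :: "real \<Rightarrow> (alg \<Rightarrow> form1) \<Rightarrow> bool" where
  "is_leibniz_d \<theta> D \<longleftrightarrow>
     (\<forall>a\<in>Alg. D a \<in> Form1) \<and>
     (\<forall>a\<in>Alg. \<forall>b\<in>Alg. D (a + b) = D a + D b) \<and>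
     (\<forall>c. \<forall>a\<in>Alg. D (smulA c a) = (\<lambda>i. smulA c (D a i))) \<and>
     (\<forall>a\<in>Alg. \<forall>b\<in>Alg. D (amul \<theta> a b) = rmul1 \<theta> (D a) b + lmul1 \<theta> a (D b)) \<and>
     (\<forall>i<4. D (zgen i) = dz i)"

definition dA :: "real \<Rightarrow> alg \<Rightarrow> form1" where
  "dA \<theta> = (THE D. is_leibniz_d \<theta> D \<and> (\<forall>a. a \<notin> Alg \<longrightarrow> D a = 0))"

definition gmap :: "real \<Rightarrow> alg \<Rightarrow> form2" where
  "gmap \<theta> a = lmul2 \<theta> a (\<Sum>i<4. \<Sum>j<4. lmul2 \<theta> (cA (Pmat i j / 2)) (dz2 \<theta> i j))"

definition ginvC :: "real \<Rightarrow> form2 \<Rightarrow> alg" where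
  "ginvC \<theta> \<tau> = (\<Sum>i<4. \<Sum>j<4. amul \<theta> (\<tau> i j) (cA (2 * Pmat i j)))"

definition nablaC :: "real \<Rightarrow> form1 \<Rightarrow> form2" where
  "nablaC \<theta> \<omega> = (\<Sum>i<4. tens \<theta> (dA \<theta> (\<omega> i)) (dz i))"

definition sigmaC :: "real \<Rightarrow> form2 \<Rightarrow> form2" where
  "sigmaC \<theta> \<tau> = (\<Sum>i<4. \<Sum>j<4. lmul2 \<theta> (\<tau> i j) (lmul2 \<theta> (cA (Rmat \<theta> j i)) (dz2 \<theta> j i)))"

text \<open>sigma (x) id on Omega^1 (x) Omega^1 (x) Omega^1, using
  T = sum_k (sum_ij T_ijk dz^i (x) dz^j) (x) dz^k.\<close>
definition sigma_id :: "real \<Rightarrow> (form2 \<Rightarrow> form2) \<Rightarrow> form3 \<Rightarrow> form3" where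
  "sigma_id \<theta> S T = (\<Sum>k<4. tens12 \<theta> (S (\<lambda>i j. if i < 4 \<and> j < 4 then T i j k else 0)) (dz k))"

text \<open>id (x) g^{-1} on Omega^1 (x) Omega^1 (x) Omega^1, using
  T = sum_ijk (T_ijk dz^i) (x) (dz^j (x) dz^k).\<close>
definition id_ginv :: "real \<Rightarrow> (form2 \<Rightarrow> alg) \<Rightarrow> form3 \<Rightarrow> form1" where
  "id_ginv \<theta> Gi T = (\<Sum>i<4. \<Sum>j<4. \<Sum>k<4.
       lmul1 \<theta> (T i j k) (rmul1 \<theta> (dz i) (Gi (dz2 \<theta> j k))))"

definition riemannian_structure ::
  "real \<Rightarrow> (alg \<Rightarrow> form2) \<Rightarrow> (form2 \<Rightarrow> alg) \<Rightarrow> (form1 \<Rightarrow> form2) \<Rightarrow> (form2 \<Rightarrow> form2) \<Rightarrow> bool" where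
  "riemannian_structure \<theta> g Gi N S \<longleftrightarrow>
    \<comment> \<open>g is a bimodule map A -> Omega^1 (x) Omega^1\<close>
    (\<forall>a\<in>Alg. g a \<in> Form2) \<and>
    (\<forall>a\<in>Alg. \<forall>b\<in>Alg. g (a + b) = g a + g b) \<and>
    (\<forall>a\<in>Alg. \<forall>b\<in>Alg. g (amul \<theta> a b) = lmul2 \<theta> a (g b)) \<and>
    (\<forall>a\<in>Alg. \<forall>b\<in>Alg. g (amul \<theta> a b) = rmul2 \<theta> (g a) b) \<and>
    \<comment> \<open>g^{-1} is a bimodule map Omega^1 (x) Omega^1 -> A\<close>
    (\<forall>\<tau>\<in>Form2. Gi \<tau> \<in> Alg) \<and>
    (\<forall>\<tau>\<in>Form2. \<forall>\<upsilon>\<in>Form2. Gi (\<tau> + \<upsilon>) = Gi \<tau> + Gi \<upsilon>) \<and>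
    (\<forall>a\<in>Alg. \<forall>\<tau>\<in>Form2. Gi (lmul2 \<theta> a \<tau>) = amul \<theta> a (Gi \<tau>)) \<and>
    (\<forall>a\<in>Alg. \<forall>\<tau>\<in>Form2. Gi (rmul2 \<theta> \<tau> a) = amul \<theta> (Gi \<tau>) a) \<and>
    \<comment> \<open>inverse identities, with g(1) = sum_ij (G_ij dz^i) (x) dz^j\<close>
    (\<forall>\<omega>\<in>Form1. (\<Sum>i<4. \<Sum>j<4.
        lmul1 \<theta> (Gi (tens \<theta> \<omega> (lmul1 \<theta> (g oneA i j) (dz i)))) (dz j)) = \<omega>) \<and>
    (\<forall>\<omega>\<in>Form1. (\<Sum>i<4. \<Sum>j<4.
        rmul1 \<theta> (lmul1 \<theta> (g oneA i j) (dz i)) (Gi (tens \<theta> (dz j) \<omega>))) = \<omega>) \<and>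
    \<comment> \<open>sigma is a bimodule isomorphism\<close>
    bij_betw S Form2 Form2 \<and>
    (\<forall>\<tau>\<in>Form2. \<forall>\<upsilon>\<in>Form2. S (\<tau> + \<upsilon>) = S \<tau> + S \<upsilon>) \<and>
    (\<forall>a\<in>Alg. \<forall>\<tau>\<in>Form2. S (lmul2 \<theta> a \<tau>) = lmul2 \<theta> a (S \<tau>)) \<and>
    (\<forall>a\<in>Alg. \<forall>\<tau>\<in>Form2. S (rmul2 \<theta> \<tau> a) = rmul2 \<theta> (S \<tau>) a) \<and>
    \<comment> \<open>(nabla, sigma) is a bimodule connection\<close>
    (\<forall>\<omega>\<in>Form1. N \<omega> \<in> Form2) \<and>
    (\<forall>\<omega>\<in>Form1. \<forall>\<zeta>\<in>Form1. N (\<omega> + \<zeta>) = N \<omega> + N \<zeta>) \<and>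
    (\<forall>a\<in>Alg. \<forall>\<omega>\<in>Form1. N (lmul1 \<theta> a \<omega>) = lmul2 \<theta> a (N \<omega>) + tens \<theta> (dA \<theta> a) \<omega>) \<and>
    (\<forall>a\<in>Alg. \<forall>\<omega>\<in>Form1. N (rmul1 \<theta> \<omega> a) = rmul2 \<theta> (N \<omega>) a + S (tens \<theta> \<omega> (dA \<theta> a))) \<and>
    \<comment> \<open>g^{-1} o sigma = g^{-1}\<close>
    (\<forall>\<tau>\<in>Form2. Gi (S \<tau>) = Gi \<tau>) \<and>
    \<comment> \<open>(id (x) g^{-1}) o nabla^(x) = d o g^{-1}, checked on (generating) simple tensors\<close>
    (\<forall>\<omega>\<in>Form1. \<forall>\<zeta>\<in>Form1.
       id_ginv \<theta> Gi (tens12 \<theta> (N \<omega>) \<zeta> + sigma_id \<theta> S (tens21 \<theta> \<omega> (N \<zeta>)))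
         = dA \<theta> (Gi (tens \<theta> \<omega> \<zeta>)))"

end

theory Submission
  imports Defs
begin

text \<open>In the ordered monomial basis z^m of A every structure constant is a phase
  e^{i \<theta> s} whose exponent s is bilinear in the multi-indices and built from the integer
  matrix S with R^{ab} = e^{i \<theta> S_ab}, which is antisymmetric. The Leibniz extension d is
  therefore explicit: the k-th component of d a is a partial derivative in z^k twisted by a
  phase. Its Leibniz rule reduces on monomials to identities between the bilinear exponents,
  which hold by antisymmetry of S, and any two Leibniz extensions agree on monomials by induction
  on the degree.

  In the basis dz^i the metric pairs dz^i only with dz^(i+2 mod 4), the braiding is the
  transposition twisted by R, and \<nabla> is the trivial connection, so every axiom becomes a
  componentwise identity. The twists by paired indices are mutually inverse, which makes g
  central, and R^{i,i+2} = 1 gives the \<sigma>-invariance of g^{-1}. Metric compatibility is the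
  Leibniz rule for d together with the way d commutes with the twists.\<close>

section \<open>The monomial basis of A\<close>

definition supp :: "alg \<Rightarrow> mi set" where
  "supp f = {m. f m \<noteq> 0}"

definition monom :: "mi \<Rightarrow> alg" where
  "monom q = (\<lambda>m. if m = q then 1 else 0)"

definition unit_mi :: "nat \<Rightarrow> mi" where
  "unit_mi k = (\<lambda>j. if j = k then 1 else 0)"

definition four_vars :: "mi \<Rightarrow> bool" where
  "four_vars m \<longleftrightarrow> (\<forall>k\<ge>4. m k = 0)"

lemma sum_apply: "(sum F A) x = (\<Sum>a\<in>A. F a x)"
  by (induction A rule: infinite_finite_induct) auto

lemma sum_apply2: "(sum F A) x y = (\<Sum>a\<in>A. F a x y)"
  by (simp add: sum_apply)

lemma sum_apply3: "(sum F A) x y z = (\<Sum>a\<in>A. F a x y z)"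
  by (simp add: sum_apply)

lemma sum_sum_apply: "(\<Sum>a\<in>A. \<Sum>b\<in>B. F a b) x = (\<Sum>a\<in>A. \<Sum>b\<in>B. F a b x)"
  by (simp add: sum_apply)

lemma sum_sum_apply2: "(\<Sum>a\<in>A. \<Sum>b\<in>B. F a b) x y = (\<Sum>a\<in>A. \<Sum>b\<in>B. F a b x y)"
  by (simp add: sum_apply)

lemma sum_sum_sum_apply:
  "(\<Sum>a\<in>A. \<Sum>b\<in>B. \<Sum>c\<in>C. F a b c) x = (\<Sum>a\<in>A. \<Sum>b\<in>B. \<Sum>c\<in>C. F a b c x)"
  by (simp add: sum_apply)

lemma Alg_iff: "f \<in> Alg \<longleftrightarrow> finite (supp f) \<and> (\<forall>m\<in>supp f. four_vars m)"
  by (auto simp: Alg_def supp_def four_vars_def)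

lemma supp_add: "supp (f + g) \<subseteq> supp f \<union> supp g"
  by (auto simp: supp_def)

lemma supp_smulA: "supp (smulA c f) \<subseteq> supp f"
  by (auto simp: supp_def smulA_def)

lemma supp_monom: "supp (monom q) = {q}"
  by (auto simp: supp_def monom_def)

lemma Alg_zero [simp]: "0 \<in> Alg"
  by (auto simp: Alg_def)

lemma Alg_add [simp]: "f \<in> Alg \<Longrightarrow> g \<in> Alg \<Longrightarrow> f + g \<in> Alg"
  unfolding Alg_iff using supp_add by (meson Un_iff finite_Un rev_finite_subset subsetD)

lemma Alg_smulA [simp]: "f \<in> Alg \<Longrightarrow> smulA c f \<in> Alg"
  unfolding Alg_iff using supp_smulA by (meson rev_finite_subset subsetD)

lemma Alg_monom [simp]: "four_vars q \<Longrightarrow> monom q \<in> Alg"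
  by (simp add: Alg_iff supp_monom)

lemma four_vars_0 [simp]: "four_vars 0"
  by (simp add: four_vars_def)

lemma four_vars_unit_mi [simp]: "k < 4 \<Longrightarrow> four_vars (unit_mi k)"
  by (simp add: four_vars_def unit_mi_def)

lemma oneA_eq_monom: "oneA = monom 0"
  by (simp add: oneA_def monom_def zero_fun_def)

lemma zgen_eq_monom: "zgen i = monom (unit_mi i)"
  by (simp add: zgen_def monom_def unit_mi_def)

lemma Alg_oneA [simp]: "oneA \<in> Alg"
  by (simp add: oneA_eq_monom)

lemma Alg_zgen [simp]: "i < 4 \<Longrightarrow> zgen i \<in> Alg"
  by (simp add: zgen_eq_monom)

lemma unit_mi_self [simp]: "unit_mi k k = 1"
  by (simp add: unit_mi_def)

lemma add_unit_mi_diff [simp]: "q + unit_mi k - unit_mi k = q"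
  by (simp add: fun_eq_iff unit_mi_def)

lemma unit_mi_summandE:
  assumes "m k \<noteq> 0"
  obtains q where "m = q + unit_mi k"
proof
  show "m = (m - unit_mi k) + unit_mi k"
    using assms by (simp add: fun_eq_iff unit_mi_def)
qed

lemma smulA_apply [simp]: "smulA c f m = c * f m"
  by (simp add: smulA_def)

lemma smulA_zero [simp]: "smulA 0 f = 0" "smulA c 0 = 0"
  by (auto simp: smulA_def fun_eq_iff)

lemma smulA_one [simp]: "smulA 1 f = f"
  by (auto simp: smulA_def fun_eq_iff)

lemma smulA_smulA [simp]: "smulA a (smulA b f) = smulA (a * b) f"
  by (auto simp: smulA_def fun_eq_iff)

lemma smulA_add: "smulA c (f + g) = smulA c f + smulA c g"
  by (auto simp: smulA_def fun_eq_iff algebra_simps)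

lemma smulA_add_left: "smulA a f + smulA b f = smulA (a + b) f"
  by (simp add: fun_eq_iff distrib_right)

lemma amul_eq_sum:
  assumes "finite S" "finite T" "supp f \<subseteq> S" "supp g \<subseteq> T"
  shows "amul \<theta> f g p = (\<Sum>(m, n)\<in>S \<times> T. if m + n = p then mcoef \<theta> m n * f m * g n else 0)"
proof -
  let ?X = "{(m, n). f m \<noteq> 0 \<and> g n \<noteq> 0 \<and> (\<lambda>k. m k + n k) = p}"
  have X: "?X \<subseteq> S \<times> T"
    using assms by (auto simp: supp_def)
  have "(\<Sum>(m, n)\<in>S \<times> T. if m + n = p then mcoef \<theta> m n * f m * g n else 0)
      = (\<Sum>(m, n)\<in>?X. if m + n = p then mcoef \<theta> m n * f m * g n else 0)"
    by (rule sum.mono_neutral_right) (use assms X in \<open>auto simp: plus_fun_def split: if_splits\<close>)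
  also have "\<dots> = (\<Sum>(m, n)\<in>?X. mcoef \<theta> m n * f m * g n)"
    by (rule sum.cong) (auto simp: plus_fun_def)
  finally show ?thesis
    unfolding amul_def by simp
qed

lemma amul_zero [simp]: "amul \<theta> 0 g = 0" "amul \<theta> f 0 = 0"
  by (auto simp: amul_def fun_eq_iff)

lemma mcoef_zero [simp]: "mcoef \<theta> m 0 = 1" "mcoef \<theta> 0 m = 1"
  by (simp_all add: mcoef_def)

lemma amul_cA_right [simp]: "amul \<theta> f (cA c) = smulA c f"
proof (rule ext)
  fix p
  have "{(m, n). f m \<noteq> 0 \<and> cA c n \<noteq> 0 \<and> (\<lambda>k. m k + n k) = p}
        = (if c \<noteq> 0 \<and> f p \<noteq> 0 then {(p, 0)} else {})"
    by (auto simp: cA_def oneA_def zero_fun_def)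
  then show "amul \<theta> f (cA c) p = smulA c f p"
    by (auto simp: amul_def cA_def oneA_def zero_fun_def[symmetric])
qed

lemma amul_cA_left [simp]: "amul \<theta> (cA c) f = smulA c f"
proof (rule ext)
  fix p
  have "{(m, n). cA c m \<noteq> 0 \<and> f n \<noteq> 0 \<and> (\<lambda>k. m k + n k) = p}
        = (if c \<noteq> 0 \<and> f p \<noteq> 0 then {(0, p)} else {})"
    by (auto simp: cA_def oneA_def zero_fun_def split: if_splits)
  then show "amul \<theta> (cA c) f p = smulA c f p"
    by (auto simp: amul_def cA_def oneA_def zero_fun_def[symmetric])
qed

lemma amul_oneA [simp]: "amul \<theta> f oneA = f" "amul \<theta> oneA f = f"
  using amul_cA_right[of \<theta> f 1] amul_cA_left[of \<theta> 1 f] by (simp_all add: cA_def)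

lemma amul_monom: "amul \<theta> (monom a) (monom b) = smulA (mcoef \<theta> a b) (monom (a + b))"
proof (rule ext)
  fix p
  have "{(m, n). monom a m \<noteq> 0 \<and> monom b n \<noteq> 0 \<and> (\<lambda>k. m k + n k) = p}
        = (if p = a + b then {(a, b)} else {})"
    by (auto simp: monom_def plus_fun_def)
  then show "amul \<theta> (monom a) (monom b) p = smulA (mcoef \<theta> a b) (monom (a + b)) p"
    by (auto simp: amul_def monom_def)
qed

lemma amul_add_left:
  assumes "f \<in> Alg" "g \<in> Alg" "h \<in> Alg"
  shows "amul \<theta> (f + g) h = amul \<theta> f h + amul \<theta> g h"
proof (rule ext)
  fix p
  let ?S = "supp f \<union> supp g"
  have fin: "finite ?S" "finite (supp h)"
    using assms by (auto simp: Alg_iff)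
  have S: "supp (f + g) \<subseteq> ?S" "supp f \<subseteq> ?S" "supp g \<subseteq> ?S"
    using supp_add by auto
  show "amul \<theta> (f + g) h p = (amul \<theta> f h + amul \<theta> g h) p"
    unfolding plus_fun_apply amul_eq_sum[OF fin S(1) order_refl] amul_eq_sum[OF fin S(2) order_refl]
      amul_eq_sum[OF fin S(3) order_refl] sum.distrib[symmetric]
    by (rule sum.cong) (auto simp: algebra_simps)
qed

lemma amul_add_right:
  assumes "f \<in> Alg" "g \<in> Alg" "h \<in> Alg"
  shows "amul \<theta> h (f + g) = amul \<theta> h f + amul \<theta> h g"
proof (rule ext)
  fix p
  let ?S = "supp f \<union> supp g"
  have fin: "finite (supp h)" "finite ?S"
    using assms by (auto simp: Alg_iff)
  have S: "supp (f + g) \<subseteq> ?S" "supp f \<subseteq> ?S" "supp g \<subseteq> ?S"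
    using supp_add by auto
  show "amul \<theta> h (f + g) p = (amul \<theta> h f + amul \<theta> h g) p"
    unfolding plus_fun_apply amul_eq_sum[OF fin order_refl S(1)] amul_eq_sum[OF fin order_refl S(2)]
      amul_eq_sum[OF fin order_refl S(3)] sum.distrib[symmetric]
    by (rule sum.cong) (auto simp: algebra_simps)
qed

lemma amul_smulA_left [simp]: "amul \<theta> (smulA c f) g = smulA c (amul \<theta> f g)"
proof (cases "c = 0")
  case False
  then have "{(m, n). smulA c f m \<noteq> 0 \<and> g n \<noteq> 0 \<and> (\<lambda>k. m k + n k) = p}
      = {(m, n). f m \<noteq> 0 \<and> g n \<noteq> 0 \<and> (\<lambda>k. m k + n k) = p}" for p
    by auto
  then show ?thesis
    unfolding amul_def by (auto simp: fun_eq_iff sum_distrib_left case_prod_beta mult_ac)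
qed simp

lemma amul_smulA_right [simp]: "amul \<theta> f (smulA c g) = smulA c (amul \<theta> f g)"
proof (cases "c = 0")
  case False
  then have "{(m, n). f m \<noteq> 0 \<and> smulA c g n \<noteq> 0 \<and> (\<lambda>k. m k + n k) = p}
      = {(m, n). f m \<noteq> 0 \<and> g n \<noteq> 0 \<and> (\<lambda>k. m k + n k) = p}" for p
    by auto
  then show ?thesis
    unfolding amul_def by (auto simp: fun_eq_iff sum_distrib_left case_prod_beta mult_ac)
qed simp

lemma supp_amul: "supp (amul \<theta> f g) \<subseteq> (\<lambda>(m, n). m + n) ` (supp f \<times> supp g)"
proof
  fix p
  assume p: "p \<in> supp (amul \<theta> f g)"
  have "{(m, n). f m \<noteq> 0 \<and> g n \<noteq> 0 \<and> (\<lambda>k. m k + n k) = p} \<noteq> {}"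
  proof
    assume "{(m, n). f m \<noteq> 0 \<and> g n \<noteq> 0 \<and> (\<lambda>k. m k + n k) = p} = {}"
    then have "amul \<theta> f g p = 0"
      unfolding amul_def by (simp only: sum.empty)
    with p show False
      by (simp add: supp_def)
  qed
  then obtain m n where "f m \<noteq> 0" "g n \<noteq> 0" "(\<lambda>k. m k + n k) = p"
    by blast
  then show "p \<in> (\<lambda>(m, n). m + n) ` (supp f \<times> supp g)"
    by (auto simp: supp_def plus_fun_def intro!: image_eqI[where x = "(m, n)"])
qed

lemma Alg_amul [simp]:
  assumes "f \<in> Alg" "g \<in> Alg"
  shows "amul \<theta> f g \<in> Alg"
proof -
  have "finite (supp (amul \<theta> f g))"
    using assms by (intro finite_subset[OF supp_amul]) (auto simp: Alg_iff)
  moreover have "four_vars p" if p: "p \<in> supp (amul \<theta> f g)" for p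
  proof -
    obtain m n where "m \<in> supp f" "n \<in> supp g" "p = m + n"
      using supp_amul[of \<theta> f g] p by auto
    then show ?thesis
      using assms by (auto simp: Alg_iff four_vars_def)
  qed
  ultimately show ?thesis
    by (simp add: Alg_iff)
qed

lemma Alg_monom_expansion:
  assumes "a \<in> Alg"
  shows "a = (\<Sum>m\<in>supp a. smulA (a m) (monom m))"
proof (rule ext)
  fix q
  have "(\<Sum>m\<in>supp a. smulA (a m) (monom m)) q = (\<Sum>m\<in>supp a. if m = q then a m else 0)"
    unfolding sum_apply by (intro sum.cong) (auto simp: monom_def)
  also have "\<dots> = a q"
    using assms by (simp add: sum.delta' Alg_iff) (simp add: supp_def)
  finally show "a q = (\<Sum>m\<in>supp a. smulA (a m) (monom m)) q"
    by simp
qed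

lemma Alg_induct:
  assumes a: "a \<in> Alg"
    and zero: "P 0"
    and add: "\<And>x y. x \<in> Alg \<Longrightarrow> y \<in> Alg \<Longrightarrow> P x \<Longrightarrow> P y \<Longrightarrow> P (x + y)"
    and monom: "\<And>c m. four_vars m \<Longrightarrow> P (smulA c (monom m))"
  shows "P a"
proof -
  have fin: "finite (supp a)" and vars: "\<And>m. m \<in> supp a \<Longrightarrow> four_vars m"
    using a by (auto simp: Alg_iff)
  have "P (\<Sum>m\<in>F. smulA (a m) (monom m)) \<and> (\<Sum>m\<in>F. smulA (a m) (monom m)) \<in> Alg"
    if "finite F" "F \<subseteq> supp a" for F
    using that
  proof (induction F rule: finite_subset_induct)
    case empty
    show ?case
      using zero by (simp only: sum.empty Alg_zero simp_thms)
  next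
    case (insert m F)
    have m: "smulA (a m) (monom m) \<in> Alg"
      using vars insert.hyps by simp
    have "(\<Sum>m\<in>insert m F. smulA (a m) (monom m)) = smulA (a m) (monom m) + (\<Sum>m\<in>F. smulA (a m) (monom m))"
      using insert.hyps(1,3) by (rule sum.insert)
    then show ?case
      using add[OF m] monom[of m "a m"] vars[of m] insert.hyps(2) insert.IH m by (metis Alg_add)
  qed
  then show ?thesis
    using fin Alg_monom_expansion[OF a] by (metis order_refl)
qed

section \<open>Phases\<close>

definition R_exponent :: "nat \<Rightarrow> nat \<Rightarrow> int" where
  "R_exponent a b = [[0, -1, 0, 1], [1, 0, -1, 0], [0, 1, 0, -1], [-1, 0, 1, 0]] ! a ! b"

definition phase :: "real \<Rightarrow> complex \<Rightarrow> complex" where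
  "phase \<theta> x = exp (\<i> * of_real \<theta> * x)"

definition twist_coef :: "real \<Rightarrow> nat \<Rightarrow> mi \<Rightarrow> complex" where
  "twist_coef \<theta> i n = (\<Prod>j<4. Rmat \<theta> j i ^ n j)"

text \<open>The phase acquired when dz^k is moved to the right past the z^j with j > k.\<close>

definition deriv_phase :: "real \<Rightarrow> nat \<Rightarrow> mi \<Rightarrow> complex" where
  "deriv_phase \<theta> k q = (\<Prod>j\<in>{k<..<4}. Rmat \<theta> j k ^ q j)"

lemma less_4_cases: "(a::nat) < 4 \<Longrightarrow> a = 0 \<or> a = 1 \<or> a = 2 \<or> a = 3"
  by auto

lemma phase_add: "phase \<theta> (x + y) = phase \<theta> x * phase \<theta> y"
  by (simp add: phase_def distrib_left exp_add)

lemma phase_0 [simp]: "phase \<theta> 0 = 1"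
  by (simp add: phase_def)

lemma phase_power: "phase \<theta> x ^ k = phase \<theta> (of_nat k * x)"
  by (simp add: phase_def exp_of_nat_mult[symmetric] mult_ac)

lemma prod_phase: "finite A \<Longrightarrow> (\<Prod>j\<in>A. phase \<theta> (f j)) = phase \<theta> (\<Sum>j\<in>A. f j)"
  by (induction A rule: finite_induct) (auto simp: phase_add)

lemma phase_neq_0 [simp]: "phase \<theta> x \<noteq> 0"
  by (simp add: phase_def)

lemma Rmat_eq_phase: "a < 4 \<Longrightarrow> b < 4 \<Longrightarrow> Rmat \<theta> a b = phase \<theta> (of_int (R_exponent a b))"
  by (auto dest!: less_4_cases simp: Rmat_def R_exponent_def phase_def)

lemma R_exponent_antisym: "a < 4 \<Longrightarrow> b < 4 \<Longrightarrow> R_exponent a b = - R_exponent b a"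
  by (auto dest!: less_4_cases simp: R_exponent_def)

lemma Rmat_mult_transpose: "a < 4 \<Longrightarrow> b < 4 \<Longrightarrow> Rmat \<theta> a b * Rmat \<theta> b a = 1"
  by (simp add: Rmat_eq_phase phase_add[symmetric] R_exponent_antisym[of a b])

lemma twist_coef_eq_phase:
  "i < 4 \<Longrightarrow> twist_coef \<theta> i n = phase \<theta> (\<Sum>j<4. of_nat (n j) * of_int (R_exponent j i))"
  unfolding twist_coef_def by (simp add: Rmat_eq_phase phase_power prod_phase)

lemma deriv_phase_eq_phase:
  "k < 4 \<Longrightarrow> deriv_phase \<theta> k n = phase \<theta> (\<Sum>j\<in>{k<..<4}. of_nat (n j) * of_int (R_exponent j k))"
  unfolding deriv_phase_def by (simp add: Rmat_eq_phase phase_power prod_phase)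

lemma mcoef_eq_phase:
  "mcoef \<theta> m n = phase \<theta> (\<Sum>i<4. \<Sum>j<i. of_nat (m i * n j) * of_int (R_exponent j i))"
  unfolding mcoef_def by (simp add: Rmat_eq_phase phase_power prod_phase)

lemma mcoef_neq_0 [simp]: "mcoef \<theta> m n \<noteq> 0"
  by (simp add: mcoef_eq_phase)

lemma deriv_phase_add_unit_mi [simp]: "deriv_phase \<theta> k (q + unit_mi k) = deriv_phase \<theta> k q"
  unfolding deriv_phase_def by (intro prod.cong) (auto simp: unit_mi_def)

lemma sum_lessThan_4: "(\<Sum>j<4. f j) = f 0 + f 1 + f 2 + f (3::nat)"
  by (simp add: eval_nat_numeral)

lemma sums_lessThan_3: "(\<Sum>j<0. f j) = 0" "(\<Sum>j<1. f j) = f 0" "(\<Sum>j<2. f j) = f 0 + f 1"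
  "(\<Sum>j<3. f j) = f 0 + f 1 + f (2::nat)"
  by (simp_all add: eval_nat_numeral)

lemma greaterThanLessThan_4:
  "{0<..<4::nat} = {1, 2, 3}" "{1<..<4::nat} = {2, 3}" "{Suc 0<..<4::nat} = {2, 3}"
  "{2<..<4::nat} = {3}" "{3<..<4::nat} = {}"
  by auto

lemma R_exponent_eval:
  "R_exponent 0 0 = 0" "R_exponent 0 1 = -1" "R_exponent 0 2 = 0" "R_exponent 0 3 = 1"
  "R_exponent 1 0 = 1" "R_exponent 1 1 = 0" "R_exponent 1 2 = -1" "R_exponent 1 3 = 0"
  "R_exponent 2 0 = 0" "R_exponent 2 1 = 1" "R_exponent 2 2 = 0" "R_exponent 2 3 = -1"
  "R_exponent 3 0 = -1" "R_exponent 3 1 = 0" "R_exponent 3 2 = 1" "R_exponent 3 3 = 0"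
  "R_exponent 0 (Suc 0) = -1" "R_exponent (Suc 0) 0 = 1" "R_exponent (Suc 0) (Suc 0) = 0"
  "R_exponent (Suc 0) 2 = -1" "R_exponent (Suc 0) 3 = 0" "R_exponent 2 (Suc 0) = 1"
  "R_exponent 3 (Suc 0) = 0"
  by (simp_all add: R_exponent_def)

lemmas phase_eval = sum_lessThan_4 sums_lessThan_3 greaterThanLessThan_4 R_exponent_eval

text \<open>With B the bilinear exponent of mcoef and c_k, l_k the linear exponents of deriv_phase
  and twist_coef, the next two identities say B(e_k, n) + c_k(n) = l_k(n), true since
  R_exponent vanishes on the diagonal, and B(m, e_k) + c_k(m) = 0, true since it is
  antisymmetric.\<close>

lemma mcoef_deriv_phase_left:
  assumes "k < 4" "m k \<noteq> 0"
  shows "mcoef \<theta> m n * deriv_phase \<theta> k (m + n)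
    = deriv_phase \<theta> k m * twist_coef \<theta> k n * mcoef \<theta> (m - unit_mi k) n"
proof -
  obtain q where "m = q + unit_mi k"
    using assms(2) by (rule unit_mi_summandE)
  then show ?thesis
    using less_4_cases[OF assms(1)]
    by (elim disjE) (simp_all add: mcoef_eq_phase deriv_phase_eq_phase twist_coef_eq_phase
        phase_add[symmetric] phase_eval unit_mi_def algebra_simps)
qed

lemma mcoef_deriv_phase_right:
  assumes "k < 4" "n k \<noteq> 0"
  shows "mcoef \<theta> m n * deriv_phase \<theta> k (m + n) = deriv_phase \<theta> k n * mcoef \<theta> m (n - unit_mi k)"
proof -
  obtain q where "n = q + unit_mi k"
    using assms(2) by (rule unit_mi_summandE)
  then show ?thesis
    using less_4_cases[OF assms(1)]
    by (elim disjE) (simp_all add: mcoef_eq_phase deriv_phase_eq_phase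
        phase_add[symmetric] phase_eval unit_mi_def algebra_simps)
qed

lemma twist_coef_add_unit_mi:
  "k < 4 \<Longrightarrow> l < 4 \<Longrightarrow> twist_coef \<theta> l (q + unit_mi k) = Rmat \<theta> k l * twist_coef \<theta> l q"
  by (elim less_4_cases[elim_format] disjE)
    (simp_all add: Rmat_eq_phase twist_coef_eq_phase phase_add[symmetric] phase_eval unit_mi_def
      algebra_simps)

section \<open>Twists\<close>

definition partner :: "nat \<Rightarrow> nat" where
  "partner i = (if i = 0 then 2 else if i = 1 then 3 else if i = 2 then 0 else 1)"

lemma twist_eq: "twist \<theta> i b = (\<lambda>n. twist_coef \<theta> i n * b n)"
  by (simp add: twist_def twist_coef_def)

lemma twist_add: "twist \<theta> i (f + g) = twist \<theta> i f + twist \<theta> i g"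
  by (simp add: twist_eq fun_eq_iff distrib_left)

lemma twist_smulA [simp]: "twist \<theta> i (smulA c f) = smulA c (twist \<theta> i f)"
  by (simp add: twist_eq fun_eq_iff)

lemma twist_zero [simp]: "twist \<theta> i 0 = 0"
  by (simp add: twist_eq fun_eq_iff)

lemma twist_oneA [simp]: "twist \<theta> i oneA = oneA"
  by (rule ext) (auto simp: twist_eq oneA_def twist_coef_def)

lemma twist_cA [simp]: "twist \<theta> i (cA c) = cA c"
  by (simp add: cA_def)

lemma twist_monom: "twist \<theta> i (monom n) = smulA (twist_coef \<theta> i n) (monom n)"
  by (rule ext) (auto simp: twist_eq monom_def)

lemma twist_commute: "twist \<theta> i (twist \<theta> j f) = twist \<theta> j (twist \<theta> i f)"
  by (simp add: twist_eq fun_eq_iff)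

lemma Alg_twist [simp]:
  assumes "f \<in> Alg"
  shows "twist \<theta> i f \<in> Alg"
proof -
  have "supp (twist \<theta> i f) \<subseteq> supp f"
    by (auto simp: supp_def twist_eq)
  then show ?thesis
    using assms unfolding Alg_iff by (meson rev_finite_subset subsetD)
qed

lemma twist_coef_partner: "l < 4 \<Longrightarrow> twist_coef \<theta> l n * twist_coef \<theta> (partner l) n = 1"
  by (elim less_4_cases[elim_format] disjE)
    (simp_all add: partner_def twist_coef_eq_phase phase_add[symmetric] phase_eval algebra_simps)

lemma twist_twist_partner: "l < 4 \<Longrightarrow> twist \<theta> l (twist \<theta> (partner l) f) = f"
  by (simp add: twist_eq fun_eq_iff mult.assoc[symmetric] twist_coef_partner)

lemma twist_twist_partner_eval:
  "twist \<theta> 0 (twist \<theta> 2 f) = f" "twist \<theta> 2 (twist \<theta> 0 f) = f"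
  "twist \<theta> 1 (twist \<theta> 3 f) = f" "twist \<theta> 3 (twist \<theta> 1 f) = f"
  "twist \<theta> (Suc 0) (twist \<theta> 3 f) = f" "twist \<theta> 3 (twist \<theta> (Suc 0) f) = f"
  using twist_twist_partner[of 0 \<theta> f] twist_twist_partner[of 1 \<theta> f]
    twist_twist_partner[of "Suc 0" \<theta> f] twist_twist_partner[of 2 \<theta> f] twist_twist_partner[of 3 \<theta> f]
  by (simp_all add: partner_def)

lemma Pmat_neq_0_imp_partner: "i < 4 \<Longrightarrow> j < 4 \<Longrightarrow> Pmat i j \<noteq> 0 \<Longrightarrow> j = partner i"
  by (elim less_4_cases[elim_format] disjE) (simp_all add: Pmat_def partner_def)

section \<open>The exterior derivative\<close>

text \<open>The coefficient of z^q in the k-th component of d a: a partial derivative in z^k,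
  twisted by deriv_phase.\<close>

definition d_coord :: "real \<Rightarrow> alg \<Rightarrow> form1" where
  "d_coord \<theta> a =
    (\<lambda>k q. if k < 4 then of_nat (Suc (q k)) * deriv_phase \<theta> k q * a (q + unit_mi k) else 0)"

lemma d_coord_add_apply [simp]: "d_coord \<theta> (a + b) k = d_coord \<theta> a k + d_coord \<theta> b k"
  by (simp add: d_coord_def fun_eq_iff algebra_simps)

lemma d_coord_smulA_apply [simp]: "d_coord \<theta> (smulA c a) k = smulA c (d_coord \<theta> a k)"
  by (simp add: d_coord_def fun_eq_iff algebra_simps)

lemma d_coord_zero_apply [simp]: "d_coord \<theta> 0 k = 0"
  by (simp add: d_coord_def fun_eq_iff)

lemma d_coord_ge_4 [simp]: "\<not> k < 4 \<Longrightarrow> d_coord \<theta> a k = 0"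
  by (simp add: d_coord_def fun_eq_iff)

lemma Alg_d_coord [simp]:
  assumes "a \<in> Alg"
  shows "d_coord \<theta> a k \<in> Alg"
proof (cases "k < 4")
  case True
  have supp: "supp (d_coord \<theta> a k) \<subseteq> (\<lambda>q. q + unit_mi k) -` supp a"
    using True by (auto simp: supp_def d_coord_def)
  have "finite (supp (d_coord \<theta> a k))"
    using assms by (intro finite_subset[OF supp] finite_vimageI) (auto simp: Alg_iff inj_def)
  moreover have "four_vars q" if "q \<in> supp (d_coord \<theta> a k)" for q
  proof -
    have "four_vars (q + unit_mi k)"
      using supp that assms by (auto simp: Alg_iff)
    then show "four_vars q"
      using True by (auto simp: four_vars_def unit_mi_def)
  qed
  ultimately show ?thesis
    by (auto simp: Alg_iff)
qed simp

lemma d_coord_Form1: "a \<in> Alg \<Longrightarrow> d_coord \<theta> a \<in> Form1"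
  by (auto simp: Form1_def)

lemma d_coord_monom:
  assumes "k < 4"
  shows "d_coord \<theta> (monom p) k = smulA (of_nat (p k) * deriv_phase \<theta> k p) (monom (p - unit_mi k))"
proof (cases "p k = 0")
  case True
  have "q + unit_mi k \<noteq> p" for q
  proof
    assume "q + unit_mi k = p"
    then have "p k = q k + 1"
      by auto
    with True show False
      by simp
  qed
  then show ?thesis
    using True assms by (auto simp: d_coord_def monom_def fun_eq_iff)
next
  case False
  then obtain q where p: "p = q + unit_mi k"
    by (rule unit_mi_summandE)
  show ?thesis
    unfolding p using assms by (intro ext) (auto simp: d_coord_def monom_def)
qed

lemma d_coord_amul_monom:
  assumes k: "k < 4"
  shows "d_coord \<theta> (amul \<theta> (monom m) (monom n)) k
    = amul \<theta> (d_coord \<theta> (monom m) k) (twist \<theta> k (monom n)) + amul \<theta> (monom m) (d_coord \<theta> (monom n) k)"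
proof -
  let ?c = "mcoef \<theta> m n * deriv_phase \<theta> k (m + n)" and ?p = "m + n - unit_mi k"
  have left: "amul \<theta> (d_coord \<theta> (monom m) k) (twist \<theta> k (monom n)) = smulA (of_nat (m k) * ?c) (monom ?p)"
  proof (cases "m k = 0")
    case False
    then have "m - unit_mi k + n = ?p"
      by (auto simp: fun_eq_iff unit_mi_def)
    then show ?thesis
      using k False by (simp add: d_coord_monom twist_monom amul_monom mcoef_deriv_phase_left mult_ac)
  qed (simp add: d_coord_monom k)
  have right: "amul \<theta> (monom m) (d_coord \<theta> (monom n) k) = smulA (of_nat (n k) * ?c) (monom ?p)"
  proof (cases "n k = 0")
    case False
    then have "m + (n - unit_mi k) = ?p"
      by (auto simp: fun_eq_iff unit_mi_def)
    then show ?thesis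
      using k False by (simp add: d_coord_monom amul_monom mcoef_deriv_phase_right mult_ac)
  qed (simp add: d_coord_monom k)
  have "d_coord \<theta> (amul \<theta> (monom m) (monom n)) k = smulA ((of_nat (m k) + of_nat (n k)) * ?c) (monom ?p)"
    using k by (simp add: amul_monom d_coord_monom mult_ac)
  then show ?thesis
    unfolding left right smulA_add_left by (simp add: distrib_right)
qed

lemma d_coord_amul_apply:
  assumes a: "a \<in> Alg" and b: "b \<in> Alg" and k: "k < 4"
  shows "d_coord \<theta> (amul \<theta> a b) k = amul \<theta> (d_coord \<theta> a k) (twist \<theta> k b) + amul \<theta> a (d_coord \<theta> b k)"
proof -
  let ?leibniz = "\<lambda>a b. d_coord \<theta> (amul \<theta> a b) k
    = amul \<theta> (d_coord \<theta> a k) (twist \<theta> k b) + amul \<theta> a (d_coord \<theta> b k)"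
  have monom_left: "?leibniz (monom m) b" if m: "four_vars m" for m
    using b
  proof (rule Alg_induct[where P = "?leibniz (monom m)"])
    fix x y
    assume "x \<in> Alg" "y \<in> Alg" "?leibniz (monom m) x" "?leibniz (monom m) y"
    then show "?leibniz (monom m) (x + y)"
      using m by (simp add: amul_add_right twist_add add_ac)
  next
    fix c n
    show "?leibniz (monom m) (smulA c (monom n))"
      using d_coord_amul_monom[OF k, of \<theta> m n] by (simp add: smulA_add)
  qed simp
  show ?thesis
    using a
  proof (rule Alg_induct[where P = "\<lambda>a. ?leibniz a b"])
    fix x y
    assume "x \<in> Alg" "y \<in> Alg" "?leibniz x b" "?leibniz y b"
    then show "?leibniz (x + y) b"
      using b k by (simp add: amul_add_left add_ac)
  next
    fix c m
    assume "four_vars m"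
    then show "?leibniz (smulA c (monom m)) b"
      using monom_left by (simp add: smulA_add)
  qed simp
qed

lemma d_coord_amul:
  assumes "a \<in> Alg" "b \<in> Alg"
  shows "d_coord \<theta> (amul \<theta> a b) = rmul1 \<theta> (d_coord \<theta> a) b + lmul1 \<theta> a (d_coord \<theta> b)"
proof (rule ext)
  fix k
  show "d_coord \<theta> (amul \<theta> a b) k = (rmul1 \<theta> (d_coord \<theta> a) b + lmul1 \<theta> a (d_coord \<theta> b)) k"
    by (cases "k < 4") (simp_all add: d_coord_amul_apply assms rmul1_def lmul1_def)
qed

lemma d_coord_zgen: "i < 4 \<Longrightarrow> d_coord \<theta> (zgen i) = dz i"
proof (rule ext)
  fix k
  assume i: "i < 4"
  have "deriv_phase \<theta> i (unit_mi i) = 1"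
    by (simp add: deriv_phase_def unit_mi_def)
  moreover have "unit_mi i k = 0" if "k \<noteq> i"
    using that by (simp add: unit_mi_def)
  ultimately show "d_coord \<theta> (zgen i) k = dz i k"
    using i by (cases "k < 4") (auto simp: zgen_eq_monom d_coord_monom dz_def oneA_eq_monom)
qed

lemma d_coord_twist:
  "k < 4 \<Longrightarrow> l < 4 \<Longrightarrow> d_coord \<theta> (twist \<theta> l a) k = smulA (Rmat \<theta> k l) (twist \<theta> l (d_coord \<theta> a k))"
  by (rule ext) (simp add: d_coord_def twist_eq twist_coef_add_unit_mi)

lemma is_leibniz_d_d_coord: "is_leibniz_d \<theta> (\<lambda>a. if a \<in> Alg then d_coord \<theta> a else 0)"
proof -
  have "d_coord \<theta> (a + b) = d_coord \<theta> a + d_coord \<theta> b" for a b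
    by (rule ext) simp
  moreover have "d_coord \<theta> (smulA c a) = (\<lambda>i. smulA c (d_coord \<theta> a i))" for c a
    by (rule ext) simp
  ultimately show ?thesis
    unfolding is_leibniz_d_def by (simp add: d_coord_Form1 d_coord_amul d_coord_zgen)
qed

lemma is_leibniz_d_zero: "is_leibniz_d \<theta> D \<Longrightarrow> D 0 = 0"
  unfolding is_leibniz_d_def by (metis Alg_zero add.right_neutral add_left_cancel)

lemma is_leibniz_d_oneA:
  assumes "is_leibniz_d \<theta> D"
  shows "D oneA = 0"
proof -
  have "D (amul \<theta> oneA oneA) = rmul1 \<theta> (D oneA) oneA + lmul1 \<theta> oneA (D oneA)"
    using assms Alg_oneA unfolding is_leibniz_d_def by blast
  then have "D oneA = D oneA + D oneA"
    by (simp add: rmul1_def lmul1_def)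
  then show ?thesis
    by simp
qed

lemma is_leibniz_d_monom_add_unit_mi:
  assumes D: "is_leibniz_d \<theta> D" and q: "four_vars q" and k: "k < 4"
  shows "D (monom (q + unit_mi k))
    = (\<lambda>i. smulA (1 / mcoef \<theta> q (unit_mi k)) ((rmul1 \<theta> (D (monom q)) (zgen k) + lmul1 \<theta> (monom q) (dz k)) i))"
proof -
  have monom: "monom (q + unit_mi k) = smulA (1 / mcoef \<theta> q (unit_mi k)) (amul \<theta> (monom q) (zgen k))"
    by (simp add: zgen_eq_monom amul_monom)
  have Alg: "monom q \<in> Alg" "zgen k \<in> Alg" "amul \<theta> (monom q) (zgen k) \<in> Alg"
    using q k by simp_all
  have "D (amul \<theta> (monom q) (zgen k)) = rmul1 \<theta> (D (monom q)) (zgen k) + lmul1 \<theta> (monom q) (dz k)"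
    using D Alg k unfolding is_leibniz_d_def by metis
  moreover have "D (smulA c (amul \<theta> (monom q) (zgen k))) = (\<lambda>i. smulA c (D (amul \<theta> (monom q) (zgen k)) i))" for c
    using D Alg unfolding is_leibniz_d_def by blast
  ultimately show ?thesis
    unfolding monom by simp
qed

lemma is_leibniz_d_unique_monom:
  assumes D1: "is_leibniz_d \<theta> D1" and D2: "is_leibniz_d \<theta> D2" and "four_vars m"
  shows "D1 (monom m) = D2 (monom m)"
  using assms(3)
proof (induction "sum m {..<4}" arbitrary: m)
  case 0
  then have "\<forall>j<4. m j = 0"
    by (simp add: sum_eq_0_iff)
  with 0 have "m = 0"
    by (metis four_vars_def not_le zero_fun_apply ext)
  then show ?case
    \<comment> \<open>the induction presents m eta-expanded, so 0 appears as \<open>\<lambda>a. 0\<close>\<close>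
    using is_leibniz_d_oneA[OF D1] is_leibniz_d_oneA[OF D2] by (simp add: oneA_eq_monom zero_fun_def)
next
  case (Suc s)
  obtain k where k: "k < 4" "m k \<noteq> 0"
    using Suc.hyps(2) by (metis lessThan_iff sum.neutral nat.simps(3))
  obtain q where m: "m = q + unit_mi k"
    using k(2) by (rule unit_mi_summandE)
  have q: "four_vars q"
    using Suc.prems k(1) by (auto simp: m four_vars_def unit_mi_def)
  moreover have "s = sum q {..<4}"
    using Suc.hyps(2) k(1) by (simp add: m sum.distrib unit_mi_def)
  ultimately have "D1 (monom q) = D2 (monom q)"
    using Suc.hyps(1) by blast
  then show ?case
    unfolding m is_leibniz_d_monom_add_unit_mi[OF D1 q k(1)] is_leibniz_d_monom_add_unit_mi[OF D2 q k(1)]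
    by simp
qed

lemma is_leibniz_d_unique:
  assumes D1: "is_leibniz_d \<theta> D1" and D2: "is_leibniz_d \<theta> D2" and "a \<in> Alg"
  shows "D1 a = D2 a"
  using assms(3)
proof (rule Alg_induct[where P = "\<lambda>a. D1 a = D2 a"])
  show "D1 0 = D2 0"
    using is_leibniz_d_zero[OF D1] is_leibniz_d_zero[OF D2] by simp
next
  fix x y
  assume "x \<in> Alg" "y \<in> Alg" "D1 x = D2 x" "D1 y = D2 y"
  then show "D1 (x + y) = D2 (x + y)"
    using D1 D2 unfolding is_leibniz_d_def by simp
next
  fix c m
  assume "four_vars m"
  then show "D1 (smulA c (monom m)) = D2 (smulA c (monom m))"
    using D1 D2 is_leibniz_d_unique_monom[OF D1 D2] unfolding is_leibniz_d_def by simp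
qed

lemma dA_eq_d_coord:
  assumes "a \<in> Alg"
  shows "dA \<theta> a = d_coord \<theta> a"
proof -
  have "dA \<theta> = (\<lambda>a. if a \<in> Alg then d_coord \<theta> a else 0)"
    unfolding dA_def
  proof (rule the_equality)
    fix D
    assume "is_leibniz_d \<theta> D \<and> (\<forall>a. a \<notin> Alg \<longrightarrow> D a = 0)"
    then show "D = (\<lambda>a. if a \<in> Alg then d_coord \<theta> a else 0)"
      using is_leibniz_d_unique[OF _ is_leibniz_d_d_coord] by fastforce
  qed (simp add: is_leibniz_d_d_coord)
  then show ?thesis
    using assms by simp
qed

section \<open>The metric, the braiding and the connection in coordinates\<close>

lemma sum_lessThan_delta:
  "(\<Sum>i<(n::nat). if a = i then C i else (0::'a::comm_monoid_add)) = (if a < n then C a else 0)"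
  by (simp add: sum.delta)

lemma sum_lessThan_delta2:
  "(\<Sum>i<(n::nat). \<Sum>j<(n::nat). if a = i \<and> b = j then C i j else (0::'a::comm_monoid_add))
    = (if a < n \<and> b < n then C a b else 0)"
proof -
  have "(\<Sum>j<n. if a = i \<and> b = j then C i j else 0) = (if a = i then (if b < n then C i b else 0) else 0)"
    for i
    by (cases "a = i") (simp_all add: sum.delta)
  then show ?thesis
    by (simp add: sum.delta)
qed

lemma Form1_iff: "\<omega> \<in> Form1 \<longleftrightarrow> (\<forall>i<4. \<omega> i \<in> Alg) \<and> (\<forall>i. \<not> i < 4 \<longrightarrow> \<omega> i = 0)"
  by (auto simp: Form1_def not_less)

lemma Form2_iff:
  "\<tau> \<in> Form2 \<longleftrightarrow> (\<forall>i<4. \<forall>j<4. \<tau> i j \<in> Alg) \<and> (\<forall>i j. \<not> (i < 4 \<and> j < 4) \<longrightarrow> \<tau> i j = 0)"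
  by (auto simp: Form2_def not_less)

lemma Form1_Alg: "\<omega> \<in> Form1 \<Longrightarrow> \<omega> i \<in> Alg"
  by (cases "i < 4") (auto simp: Form1_iff)

lemma Form2_Alg: "\<tau> \<in> Form2 \<Longrightarrow> \<tau> i j \<in> Alg"
  by (cases "i < 4 \<and> j < 4") (auto simp: Form2_iff)

lemma Form1_ge_4: "\<omega> \<in> Form1 \<Longrightarrow> \<not> i < 4 \<Longrightarrow> \<omega> i = 0"
  by (auto simp: Form1_iff)

lemma Form2_ge_4: "\<tau> \<in> Form2 \<Longrightarrow> \<not> (i < 4 \<and> j < 4) \<Longrightarrow> \<tau> i j = 0"
  by (auto simp: Form2_iff)

lemma Pmat_eval:
  "Pmat 0 0 = 0" "Pmat 0 1 = 0" "Pmat 0 2 = 1" "Pmat 0 3 = 0"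
  "Pmat 1 0 = 0" "Pmat 1 1 = 0" "Pmat 1 2 = 0" "Pmat 1 3 = 1"
  "Pmat 2 0 = 1" "Pmat 2 1 = 0" "Pmat 2 2 = 0" "Pmat 2 3 = 0"
  "Pmat 3 0 = 0" "Pmat 3 1 = 1" "Pmat 3 2 = 0" "Pmat 3 3 = 0"
  "Pmat 0 (Suc 0) = 0" "Pmat (Suc 0) 0 = 0" "Pmat (Suc 0) (Suc 0) = 0" "Pmat (Suc 0) 2 = 0"
  "Pmat (Suc 0) 3 = 1" "Pmat 2 (Suc 0) = 0" "Pmat 3 (Suc 0) = 1"
  by (simp_all add: Pmat_def)

lemma Rmat_partner_eval:
  "Rmat \<theta> 0 2 = 1" "Rmat \<theta> 2 0 = 1" "Rmat \<theta> 1 3 = 1" "Rmat \<theta> 3 1 = 1"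
  "Rmat \<theta> (Suc 0) 3 = 1" "Rmat \<theta> 3 (Suc 0) = 1"
  by (simp_all add: Rmat_def)

lemma dz2_eq: "dz2 \<theta> a b = (\<lambda>i j. if i = a \<and> j = b then oneA else 0)"
  by (auto simp: dz2_def tens_def dz_def fun_eq_iff)

lemma gmap_eq: "gmap \<theta> x = (\<lambda>i j. if i < 4 \<and> j < 4 then smulA (Pmat i j / 2) x else 0)"
proof -
  have "(\<Sum>i<4. \<Sum>j<4. lmul2 \<theta> (cA (Pmat i j / 2)) (dz2 \<theta> i j)) a b
      = (\<Sum>i<4. \<Sum>j<4. if a = i \<and> b = j then cA (Pmat i j / 2) else 0)" for a b
    by (subst sum_sum_apply2) (intro sum.cong refl, auto simp: lmul2_def dz2_eq cA_def)
  then have inner: "(\<Sum>i<4. \<Sum>j<4. lmul2 \<theta> (cA (Pmat i j / 2)) (dz2 \<theta> i j))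
      = (\<lambda>a b. if a < 4 \<and> b < 4 then cA (Pmat a b / 2) else 0)"
    by (intro ext) (simp only: sum_lessThan_delta2)
  show ?thesis
    unfolding gmap_def inner by (auto simp: lmul2_def fun_eq_iff)
qed

lemma gmap_oneA: "i < 4 \<Longrightarrow> j < 4 \<Longrightarrow> gmap \<theta> oneA i j = cA (Pmat i j / 2)"
  by (simp add: gmap_eq cA_def)

lemma ginvC_eq: "ginvC \<theta> \<tau> = smulA 2 (\<tau> 0 2 + \<tau> 1 3 + \<tau> 2 0 + \<tau> 3 1)"
  by (simp add: ginvC_def sum_lessThan_4 sums_lessThan_3 Pmat_eval smulA_add)

lemma sigmaC_eq:
  "sigmaC \<theta> \<tau> = (\<lambda>a b. if a < 4 \<and> b < 4 then smulA (Rmat \<theta> a b) (\<tau> b a) else 0)"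
proof -
  have "sigmaC \<theta> \<tau> a b
      = (\<Sum>i<4. \<Sum>j<4. if b = i \<and> a = j then smulA (Rmat \<theta> j i) (\<tau> i j) else 0)" for a b
    unfolding sigmaC_def by (subst sum_sum_apply2) (intro sum.cong refl, auto simp: lmul2_def dz2_eq)
  then show ?thesis
    by (auto simp: fun_eq_iff sum_lessThan_delta2)
qed

lemma nablaC_eq: "nablaC \<theta> \<omega> = (\<lambda>a b. if b < 4 then dA \<theta> (\<omega> b) a else 0)"
proof -
  have "nablaC \<theta> \<omega> a b = (\<Sum>i<4. if b = i then dA \<theta> (\<omega> i) a else 0)" for a b
    unfolding nablaC_def by (subst sum_apply2) (intro sum.cong refl, auto simp: tens_def dz_def)
  then show ?thesis
    by (simp add: fun_eq_iff sum_lessThan_delta)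
qed

lemma ginvC_dz2: "j < 4 \<Longrightarrow> k < 4 \<Longrightarrow> ginvC \<theta> (dz2 \<theta> j k) = cA (2 * Pmat j k)"
  by (rule ext, drule less_4_cases, drule less_4_cases, elim disjE)
    (simp_all add: ginvC_eq dz2_eq cA_def Pmat_eval oneA_def)

lemma id_ginv_eq: "id_ginv \<theta> (ginvC \<theta>) T = (\<lambda>l. if l < 4 then ginvC \<theta> (T l) else 0)"
proof -
  have "lmul1 \<theta> X (rmul1 \<theta> (dz i) (ginvC \<theta> (dz2 \<theta> j k)))
      = (\<lambda>l. if l = i then smulA (2 * Pmat j k) X else 0)" if "j < 4" "k < 4" for X i j k
    using that by (intro ext) (simp add: ginvC_dz2 lmul1_def rmul1_def dz_def)
  then have "id_ginv \<theta> (ginvC \<theta>) T l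
      = (\<Sum>i<4. if l = i then (\<Sum>j<4. \<Sum>k<4. smulA (2 * Pmat j k) (T i j k)) else 0)" for l
    unfolding id_ginv_def by (subst sum_sum_sum_apply) (intro sum.cong refl, auto)
  then show ?thesis
    by (simp add: fun_eq_iff sum_lessThan_delta ginvC_def)
qed

lemma tens12_nablaC:
  "j < 4 \<Longrightarrow> tens12 \<theta> (nablaC \<theta> \<omega>) \<zeta> l j k = amul \<theta> (dA \<theta> (\<omega> j) l) (twist \<theta> l (twist \<theta> j (\<zeta> k)))"
  by (simp add: tens12_def nablaC_eq)

lemma sigma_id_sigmaC_tens21_nablaC:
  assumes "l < 4" "j < 4" "k < 4"
  shows "sigma_id \<theta> (sigmaC \<theta>) (tens21 \<theta> \<omega> (nablaC \<theta> \<zeta>)) l j k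
    = smulA (Rmat \<theta> l j) (amul \<theta> (\<omega> j) (twist \<theta> j (dA \<theta> (\<zeta> k) l)))"
proof -
  have "sigma_id \<theta> (sigmaC \<theta>) (tens21 \<theta> \<omega> (nablaC \<theta> \<zeta>)) l j k
     = (\<Sum>k'<4. if k = k'
          then sigmaC \<theta> (\<lambda>i j. if i < 4 \<and> j < 4 then tens21 \<theta> \<omega> (nablaC \<theta> \<zeta>) i j k' else 0) l j
          else 0)"
    unfolding sigma_id_def by (subst sum_apply3) (intro sum.cong refl, simp add: tens12_def dz_def)
  then show ?thesis
    using assms by (simp add: sum_lessThan_delta sigmaC_eq tens21_def nablaC_eq)
qed

section \<open>The axioms of a Riemannian structure\<close>

lemma gmap_Form2: "a \<in> Alg \<Longrightarrow> gmap \<theta> a \<in> Form2"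
  by (simp add: gmap_eq Form2_iff)

lemma gmap_add: "gmap \<theta> (a + b) = gmap \<theta> a + gmap \<theta> b"
  by (simp add: gmap_eq smulA_add fun_eq_iff)

lemma gmap_amul_eq_lmul2: "gmap \<theta> (amul \<theta> a b) = lmul2 \<theta> a (gmap \<theta> b)"
  by (simp add: gmap_eq lmul2_def fun_eq_iff)

text \<open>g is central: it pairs dz^i only with dz^(partner i), and the twists of partner indices
  cancel.\<close>

lemma lmul2_gmap_eq_rmul2_gmap: "lmul2 \<theta> a (gmap \<theta> b) = rmul2 \<theta> (gmap \<theta> a) b"
proof (rule ext, rule ext)
  fix i j
  show "lmul2 \<theta> a (gmap \<theta> b) i j = rmul2 \<theta> (gmap \<theta> a) b i j"
  proof (cases "i < 4 \<and> j < 4 \<and> Pmat i j \<noteq> 0")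
    case True
    then have "j = partner i"
      by (blast intro: Pmat_neq_0_imp_partner)
    then show ?thesis
      using True by (simp add: gmap_eq lmul2_def rmul2_def twist_twist_partner)
  qed (auto simp: gmap_eq lmul2_def rmul2_def)
qed

lemma ginvC_Alg: "\<tau> \<in> Form2 \<Longrightarrow> ginvC \<theta> \<tau> \<in> Alg"
  by (simp add: ginvC_eq Form2_Alg)

lemma ginvC_add: "ginvC \<theta> (\<tau> + \<upsilon>) = ginvC \<theta> \<tau> + ginvC \<theta> \<upsilon>"
  by (simp add: ginvC_eq smulA_add add_ac)

lemma ginvC_lmul2: "a \<in> Alg \<Longrightarrow> \<tau> \<in> Form2 \<Longrightarrow> ginvC \<theta> (lmul2 \<theta> a \<tau>) = amul \<theta> a (ginvC \<theta> \<tau>)"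
  by (simp add: ginvC_eq lmul2_def Form2_Alg amul_add_right smulA_add)

lemma ginvC_rmul2: "a \<in> Alg \<Longrightarrow> \<tau> \<in> Form2 \<Longrightarrow> ginvC \<theta> (rmul2 \<theta> \<tau> a) = amul \<theta> (ginvC \<theta> \<tau>) a"
  by (simp add: ginvC_eq rmul2_def Form2_Alg amul_add_left smulA_add twist_twist_partner_eval)

lemma ginvC_tens_gmap_oneA:
  "i < 4 \<Longrightarrow> j < 4 \<Longrightarrow>
    ginvC \<theta> (tens \<theta> \<omega> (lmul1 \<theta> (gmap \<theta> oneA i j) (dz i))) = smulA (Pmat i j) (\<omega> (partner i))"
  by (rule ext, drule less_4_cases, elim disjE)
    (simp_all add: gmap_oneA ginvC_eq tens_def lmul1_def dz_def partner_def)

lemma ginvC_tens_dz: "j < 4 \<Longrightarrow> ginvC \<theta> (tens \<theta> (dz j) \<omega>) = smulA 2 (twist \<theta> j (\<omega> (partner j)))"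
  by (drule less_4_cases, elim disjE) (simp_all add: ginvC_eq tens_def dz_def partner_def)

lemma lmul1_dz_apply: "lmul1 \<theta> X (dz j) k = (if k = j then X else 0)"
  by (simp add: lmul1_def dz_def)

lemma rmul1_lmul1_dz_apply:
  "rmul1 \<theta> (lmul1 \<theta> c (dz i)) Y k = (if k = i then amul \<theta> c (twist \<theta> i Y) else 0)"
  by (simp add: lmul1_def rmul1_def dz_def)

lemma ginvC_gmap_left_inverse:
  assumes "\<omega> \<in> Form1"
  shows "(\<Sum>i<4. \<Sum>j<4. lmul1 \<theta> (ginvC \<theta> (tens \<theta> \<omega> (lmul1 \<theta> (gmap \<theta> oneA i j) (dz i)))) (dz j))
    = \<omega>" (is "?L = _")
proof (rule ext)
  fix k
  have "?L k = (\<Sum>i<4. \<Sum>j<4. if k = j then smulA (Pmat i j) (\<omega> (partner i)) else 0)"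
    by (subst sum_sum_apply) (intro sum.cong refl, simp add: lmul1_dz_apply ginvC_tens_gmap_oneA)
  also have "\<dots> = (if k < 4 then (\<Sum>i<4. smulA (Pmat i k) (\<omega> (partner i))) else 0)"
    by (simp add: sum_lessThan_delta)
  also have "\<dots> = \<omega> k"
    using assms by (cases "k < 4")
      (auto dest!: less_4_cases simp: sum_lessThan_4 Pmat_eval partner_def Form1_ge_4)
  finally show "?L k = \<omega> k" .
qed

lemma ginvC_gmap_right_inverse:
  assumes "\<omega> \<in> Form1"
  shows "(\<Sum>i<4. \<Sum>j<4. rmul1 \<theta> (lmul1 \<theta> (gmap \<theta> oneA i j) (dz i)) (ginvC \<theta> (tens \<theta> (dz j) \<omega>)))
    = \<omega>" (is "?L = _")
proof (rule ext)
  fix k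
  let ?c = "\<lambda>i j. smulA (Pmat i j / 2) (twist \<theta> i (smulA 2 (twist \<theta> j (\<omega> (partner j)))))"
  have "?L k = (\<Sum>i<4. if k = i then (\<Sum>j<4. ?c i j) else 0)"
    by (subst sum_sum_apply) (intro sum.cong refl, simp add: rmul1_lmul1_dz_apply ginvC_tens_dz gmap_oneA)
  also have "\<dots> = (if k < 4 then (\<Sum>j<4. ?c k j) else 0)"
    by (simp add: sum_lessThan_delta)
  also have "\<dots> = \<omega> k"
    using assms by (cases "k < 4")
      (auto dest!: less_4_cases simp: sum_lessThan_4 Pmat_eval partner_def twist_twist_partner_eval Form1_ge_4)
  finally show "?L k = \<omega> k" .
qed

lemma sigmaC_involution: "\<tau> \<in> Form2 \<Longrightarrow> sigmaC \<theta> (sigmaC \<theta> \<tau>) = \<tau>"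
  by (auto simp: fun_eq_iff sigmaC_eq Rmat_mult_transpose Form2_ge_4)

lemma bij_betw_sigmaC: "bij_betw (sigmaC \<theta>) Form2 Form2"
proof -
  have "sigmaC \<theta> ` Form2 \<subseteq> Form2"
    by (auto simp: sigmaC_eq Form2_iff)
  then show ?thesis
    by (intro bij_betw_byWitness[where f' = "sigmaC \<theta>"]) (simp_all add: sigmaC_involution)
qed

lemma sigmaC_add: "sigmaC \<theta> (\<tau> + \<upsilon>) = sigmaC \<theta> \<tau> + sigmaC \<theta> \<upsilon>"
  by (simp add: sigmaC_eq smulA_add fun_eq_iff)

lemma sigmaC_lmul2: "sigmaC \<theta> (lmul2 \<theta> a \<tau>) = lmul2 \<theta> a (sigmaC \<theta> \<tau>)"
  by (simp add: sigmaC_eq lmul2_def fun_eq_iff)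

lemma sigmaC_rmul2: "sigmaC \<theta> (rmul2 \<theta> \<tau> a) = rmul2 \<theta> (sigmaC \<theta> \<tau>) a"
  by (simp add: sigmaC_eq rmul2_def twist_commute fun_eq_iff)

lemma ginvC_sigmaC: "ginvC \<theta> (sigmaC \<theta> \<tau>) = ginvC \<theta> \<tau>"
  by (simp add: ginvC_eq sigmaC_eq Rmat_partner_eval ac_simps)

lemma nablaC_Form2: "\<omega> \<in> Form1 \<Longrightarrow> nablaC \<theta> \<omega> \<in> Form2"
  by (auto simp: nablaC_eq Form2_iff dA_eq_d_coord Form1_Alg)

lemma nablaC_add: "\<omega> \<in> Form1 \<Longrightarrow> \<zeta> \<in> Form1 \<Longrightarrow> nablaC \<theta> (\<omega> + \<zeta>) = nablaC \<theta> \<omega> + nablaC \<theta> \<zeta>"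
  by (simp add: nablaC_eq dA_eq_d_coord Form1_Alg fun_eq_iff)

lemma nablaC_lmul1:
  assumes "a \<in> Alg" "\<omega> \<in> Form1"
  shows "nablaC \<theta> (lmul1 \<theta> a \<omega>) = lmul2 \<theta> a (nablaC \<theta> \<omega>) + tens \<theta> (dA \<theta> a) \<omega>"
proof (rule ext, rule ext)
  fix i j
  show "nablaC \<theta> (lmul1 \<theta> a \<omega>) i j = (lmul2 \<theta> a (nablaC \<theta> \<omega>) + tens \<theta> (dA \<theta> a) \<omega>) i j"
    using assms
    by (cases "i < 4 \<and> j < 4")
      (auto simp: nablaC_eq lmul1_def lmul2_def tens_def dA_eq_d_coord Form1_Alg Form1_ge_4
        d_coord_amul_apply add.commute zero_fun_def[symmetric])
qed

lemma nablaC_rmul1: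
  assumes "a \<in> Alg" "\<omega> \<in> Form1"
  shows "nablaC \<theta> (rmul1 \<theta> \<omega> a) = rmul2 \<theta> (nablaC \<theta> \<omega>) a + sigmaC \<theta> (tens \<theta> \<omega> (dA \<theta> a))"
proof (rule ext, rule ext)
  fix i j
  show "nablaC \<theta> (rmul1 \<theta> \<omega> a) i j = (rmul2 \<theta> (nablaC \<theta> \<omega>) a + sigmaC \<theta> (tens \<theta> \<omega> (dA \<theta> a))) i j"
    using assms
    by (cases "i < 4 \<and> j < 4")
      (auto simp: nablaC_eq rmul1_def rmul2_def sigmaC_eq tens_def dA_eq_d_coord Form1_Alg Form1_ge_4
        d_coord_amul_apply d_coord_twist)
qed

text \<open>On components, (id \<otimes> g^{-1}) \<nabla>^\<otimes> (\<omega> \<otimes> \<zeta>) is the Leibniz expansion of d g^{-1}(\<omega> \<otimes> \<zeta>):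
  the braiding contributes exactly the factor Rmat by which d fails to commute with the
  twist (d_coord_twist).\<close>

lemma nablaC_metric_compatible:
  assumes "\<omega> \<in> Form1" "\<zeta> \<in> Form1"
  shows "id_ginv \<theta> (ginvC \<theta>) (tens12 \<theta> (nablaC \<theta> \<omega>) \<zeta> + sigma_id \<theta> (sigmaC \<theta>) (tens21 \<theta> \<omega> (nablaC \<theta> \<zeta>)))
    = dA \<theta> (ginvC \<theta> (tens \<theta> \<omega> \<zeta>))" (is "?L = ?R")
proof (rule ext)
  fix l
  have Alg: "ginvC \<theta> (tens \<theta> \<omega> \<zeta>) \<in> Alg"
    using assms by (simp add: ginvC_eq tens_def Form1_Alg)
  show "?L l = ?R l"
  proof (cases "l < 4")
    case True
    then show ?thesis
      using assms Alg
      by (simp add: id_ginv_eq ginvC_eq tens12_nablaC sigma_id_sigmaC_tens21_nablaC dA_eq_d_coord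
          tens_def Form1_Alg d_coord_amul_apply d_coord_twist smulA_add add_ac)
  qed (use Alg in \<open>simp add: id_ginv_eq dA_eq_d_coord\<close>)
qed

theorem proposition4p4:
  fixes \<theta> :: real
  shows "riemannian_structure \<theta> (gmap \<theta>) (ginvC \<theta>) (nablaC \<theta>) (sigmaC \<theta>)"
  unfolding riemannian_structure_def
  by (intro conjI ballI bij_betw_sigmaC)
    (simp_all add: gmap_Form2 gmap_add gmap_amul_eq_lmul2 lmul2_gmap_eq_rmul2_gmap
      ginvC_Alg ginvC_add ginvC_lmul2 ginvC_rmul2 ginvC_gmap_left_inverse ginvC_gmap_right_inverse
      sigmaC_add sigmaC_lmul2 sigmaC_rmul2 ginvC_sigmaC
      nablaC_Form2 nablaC_add nablaC_lmul1 nablaC_rmul1 nablaC_metric_compatible)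

end
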